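(* Let $\alpha\in\mathbb{R}$, let $\tau,\pi$ be nonzero polynomials, and set $\hat\tau(z)=(1-z^2)^{-\alpha-1/2}\tau(z)$. Suppose $T^{(\alpha+1)}_\pi\hat\tau=\hat\lambda\hat\tau$ for a constant $\hat\lambda$, and set $\lambda=\hat\lambda-2\alpha-1$. Then $T^{(\alpha)}_\tau\pi=\lambda\pi$ and $$B^{(\alpha)}_{\pi\tau}A_{\tau\pi}=T^{(\alpha)}_\tau-\lambda,\qquad A_{\tau\pi}B^{(\alpha)}_{\pi\tau}=T^{(\alpha+1)}_\pi-\hat\lambda.$$
   Context: For a nonzero function $\tau$ and $\alpha\in\mathbb{R}$, $T^{(\alpha)}_\tau=(1-z^2)\left(D_z^2-2\frac{\tau_z}{\tau}D_z+\frac{\tau_{zz}}{\tau}\right)-(2\alpha+1)zD_z+(2\alpha-1)z\frac{\tau_z}{\tau}$. For functions $\tau,\pi$ define $A_{\tau\pi}=\tau^{-1}(\pi D_z-\pi')$ and $B^{(\alpha)}_{\pi\tau}=(1-z^2)A_{\pi\tau}-(2\alpha+1)z\,\tau\,\pi^{-1}$, where $A_{\pi\tau}=\pi^{-1}(\tau D_z-\tau')$. *)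

theory Defs
  imports "HOL-Analysis.Analysis" "HOL-Computational_Algebra.Polynomial"
begin

definition Top :: "real \<Rightarrow> (real \<Rightarrow> real) \<Rightarrow> (real \<Rightarrow> real) \<Rightarrow> real \<Rightarrow> real" where
  "Top \<alpha> \<tau> y z =
     (1 - z\<^sup>2) * (deriv (deriv y) z - 2 * (deriv \<tau> z / \<tau> z) * deriv y z
                   + (deriv (deriv \<tau>) z / \<tau> z) * y z)
     - (2 * \<alpha> + 1) * z * deriv y z + (2 * \<alpha> - 1) * z * (deriv \<tau> z / \<tau> z) * y z"

definition Aop :: "(real \<Rightarrow> real) \<Rightarrow> (real \<Rightarrow> real) \<Rightarrow> (real \<Rightarrow> real) \<Rightarrow> real \<Rightarrow> real" where
  "Aop \<tau> \<pi> y z = (\<pi> z * deriv y z - deriv \<pi> z * y z) / \<tau> z"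

definition Bop :: "real \<Rightarrow> (real \<Rightarrow> real) \<Rightarrow> (real \<Rightarrow> real) \<Rightarrow> (real \<Rightarrow> real) \<Rightarrow> real \<Rightarrow> real" where
  "Bop \<alpha> \<pi> \<tau> y z = (1 - z\<^sup>2) * Aop \<pi> \<tau> y z - (2 * \<alpha> + 1) * z * (\<tau> z / \<pi> z) * y z"

end

theory Submission
  imports Defs
begin

text \<open>Everything is governed by one polynomial, the concomitant
  R = (1 - z^2)(\<tau>\<pi>'' - 2\<tau>'\<pi>' + \<tau>''\<pi>) - (2\<alpha> + 1) z \<tau>\<pi>' + (2\<alpha> - 1) z \<tau>'\<pi>.
  Direct computation gives \<tau> T^(\<alpha>)_\<tau> \<pi> = R, and with w = (1 - z^2)^(-\<alpha>-1/2)
  also \<pi> T^(\<alpha>+1)_\<pi> (w\<tau>) = w (R + (2\<alpha> + 1) \<tau>\<pi>), while the compositions of A and B are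
  BA = T^(\<alpha>)_\<tau> - R/(\<tau>\<pi>) and AB = T^(\<alpha>+1)_\<pi> - R/(\<tau>\<pi>) - (2\<alpha> + 1).
  The hypothesis says R = \<lambda>\<tau>\<pi> on (-1,1) away from the zeros of \<pi>; both sides being
  polynomials, this holds identically, and all claims follow.\<close>

lemma deriv_poly: "deriv (poly p) = poly (pderiv (p :: real poly))"
  by (rule ext, rule DERIV_imp_deriv, rule poly_DERIV)

definition concomitant :: "real \<Rightarrow> real poly \<Rightarrow> real poly \<Rightarrow> real poly" where
  "concomitant \<alpha> \<tau> \<pi> =
     [:1, 0, -1:] * (\<tau> * pderiv (pderiv \<pi>) - smult 2 (pderiv \<tau> * pderiv \<pi>) + pderiv (pderiv \<tau>) * \<pi>)
     - smult (2 * \<alpha> + 1) ([:0, 1:] * \<tau> * pderiv \<pi>) + smult (2 * \<alpha> - 1) ([:0, 1:] * pderiv \<tau> * \<pi>)"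

lemma poly_concomitant:
  "poly (concomitant \<alpha> \<tau> \<pi>) z =
     (1 - z\<^sup>2) * (poly \<tau> z * poly (pderiv (pderiv \<pi>)) z - 2 * poly (pderiv \<tau>) z * poly (pderiv \<pi>) z
                   + poly (pderiv (pderiv \<tau>)) z * poly \<pi> z)
     - (2 * \<alpha> + 1) * z * poly \<tau> z * poly (pderiv \<pi>) z
     + (2 * \<alpha> - 1) * z * poly (pderiv \<tau>) z * poly \<pi> z"
  by (simp add: concomitant_def algebra_simps power2_eq_square)

lemma Top_poly:
  assumes "poly \<tau> z \<noteq> 0"
  shows "Top \<alpha> (poly \<tau>) (poly \<pi>) z = poly (concomitant \<alpha> \<tau> \<pi>) z / poly \<tau> z"
  using assms by (simp add: Top_def deriv_poly poly_concomitant field_simps)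

lemma has_real_derivative_Aop:
  fixes \<tau> \<pi> :: "real poly"
  assumes "y differentiable at z" "deriv y differentiable at z" "poly \<tau> z \<noteq> 0"
  shows "(Aop (poly \<tau>) (poly \<pi>) y has_real_derivative
           ((poly \<pi> z * deriv (deriv y) z - poly (pderiv (pderiv \<pi>)) z * y z) * poly \<tau> z
            - (poly \<pi> z * deriv y z - poly (pderiv \<pi>) z * y z) * poly (pderiv \<tau>) z) / (poly \<tau> z)\<^sup>2) (at z)"
proof -
  have "(y has_real_derivative deriv y z) (at z)" "(deriv y has_real_derivative deriv (deriv y) z) (at z)"
    using assms(1,2) by (simp_all add: DERIV_deriv_iff_real_differentiable)
  then show ?thesis
    unfolding Aop_def[abs_def] deriv_poly using assms(3)
    by (auto intro!: derivative_eq_intros simp: field_simps power2_eq_square)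
qed

lemma has_real_derivative_Bop:
  fixes \<tau> \<pi> :: "real poly"
  assumes "y differentiable at z" "deriv y differentiable at z" "poly \<pi> z \<noteq> 0"
  shows "(Bop \<alpha> (poly \<pi>) (poly \<tau>) y has_real_derivative
           ((- 2 * z * (poly \<tau> z * deriv y z - poly (pderiv \<tau>) z * y z)
             + (1 - z\<^sup>2) * (poly \<tau> z * deriv (deriv y) z - poly (pderiv (pderiv \<tau>)) z * y z)
             - (2 * \<alpha> + 1) * (poly \<tau> z * y z + z * poly (pderiv \<tau>) z * y z + z * poly \<tau> z * deriv y z))
            * poly \<pi> z
            - ((1 - z\<^sup>2) * (poly \<tau> z * deriv y z - poly (pderiv \<tau>) z * y z) - (2 * \<alpha> + 1) * z * poly \<tau> z * y z)
            * poly (pderiv \<pi>) z) / (poly \<pi> z)\<^sup>2) (at z)"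
proof -
  have "(y has_real_derivative deriv y z) (at z)" "(deriv y has_real_derivative deriv (deriv y) z) (at z)"
    using assms(1,2) by (simp_all add: DERIV_deriv_iff_real_differentiable)
  then show ?thesis
    unfolding Bop_def[abs_def] Aop_def deriv_poly using assms(3)
    by (auto intro!: derivative_eq_intros simp: field_simps power2_eq_square)
qed

lemma Bop_Aop:
  fixes \<tau> \<pi> :: "real poly"
  assumes "y differentiable at z" "deriv y differentiable at z" "poly \<tau> z \<noteq> 0" "poly \<pi> z \<noteq> 0"
  shows "Bop \<alpha> (poly \<pi>) (poly \<tau>) (Aop (poly \<tau>) (poly \<pi>) y) z
           = Top \<alpha> (poly \<tau>) y z - poly (concomitant \<alpha> \<tau> \<pi>) z / (poly \<tau> z * poly \<pi> z) * y z"
  using assms(3,4)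
  by (simp add: Bop_def Aop_def deriv_poly Top_def poly_concomitant
      DERIV_imp_deriv[OF has_real_derivative_Aop[OF assms(1-3)]])
     (simp add: field_simps power2_eq_square)

lemma Aop_Bop:
  fixes \<tau> \<pi> :: "real poly"
  assumes "y differentiable at z" "deriv y differentiable at z" "poly \<tau> z \<noteq> 0" "poly \<pi> z \<noteq> 0"
  shows "Aop (poly \<tau>) (poly \<pi>) (Bop \<alpha> (poly \<pi>) (poly \<tau>) y) z
           = Top (\<alpha> + 1) (poly \<pi>) y z
             - (poly (concomitant \<alpha> \<tau> \<pi>) z / (poly \<tau> z * poly \<pi> z) + 2 * \<alpha> + 1) * y z"
  using assms(3,4)
  by (simp add: Aop_def Bop_def deriv_poly Top_def poly_concomitant
      DERIV_imp_deriv[OF has_real_derivative_Bop[OF assms(1,2,4)]])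
     (simp add: field_simps power2_eq_square)

lemma has_real_derivative_powr_weight:
  fixes f :: "real \<Rightarrow> real"
  assumes "(f has_real_derivative f') (at x)" "-1 < x" "x < 1"
  shows "((\<lambda>x. (1 - x\<^sup>2) powr a * f x) has_real_derivative
           (1 - x\<^sup>2) powr (a - 1) * ((1 - x\<^sup>2) * f' - 2 * a * x * f x)) (at x)"
proof -
  have pos: "1 - x\<^sup>2 > 0"
    using assms(2,3) by (simp add: abs_square_less_1 abs_less_iff)
  then have "(1 - x\<^sup>2) powr a = (1 - x\<^sup>2) powr (a - 1) * (1 - x\<^sup>2)"
    by (simp add: powr_diff)
  with pos show ?thesis
    by (auto intro!: derivative_eq_intros assms(1)) (simp add: algebra_simps)
qed

lemma Top_powr_weight:
  fixes \<tau> \<pi> :: "real poly"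
  assumes z: "-1 < z" "z < 1" and "poly \<pi> z \<noteq> 0"
  shows "Top (\<alpha> + 1) (poly \<pi>) (\<lambda>x. (1 - x\<^sup>2) powr (- \<alpha> - 1/2) * poly \<tau> x) z
           = (1 - z\<^sup>2) powr (- \<alpha> - 1/2)
             * (poly (concomitant \<alpha> \<tau> \<pi>) z / poly \<pi> z + (2 * \<alpha> + 1) * poly \<tau> z)"
proof -
  define a where "a = - \<alpha> - 1/2"
  define f where "f = (\<lambda>x. (1 - x\<^sup>2) powr a * poly \<tau> x)"
  define g where "g = (\<lambda>x. (1 - x\<^sup>2) * poly (pderiv \<tau>) x - 2 * a * x * poly \<tau> x)"
  define g' where "g' = (\<lambda>x. (1 - x\<^sup>2) * poly (pderiv (pderiv \<tau>)) x - 2 * x * poly (pderiv \<tau>) x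
                              - 2 * a * (poly \<tau> x + x * poly (pderiv \<tau>) x))"
  have df: "(f has_real_derivative (1 - x\<^sup>2) powr (a - 1) * g x) (at x)" if "-1 < x" "x < 1" for x
    unfolding f_def g_def by (rule has_real_derivative_powr_weight[OF poly_DERIV that])
  have dg: "(g has_real_derivative g' x) (at x)" for x
    unfolding g_def g'_def by (auto intro!: derivative_eq_intros poly_DERIV) (simp add: algebra_simps)
  have "eventually (\<lambda>x. x \<in> {-1<..<1}) (nhds z)"
    using z by (intro eventually_nhds_in_open) auto
  then have "eventually (\<lambda>x. deriv f x = (1 - x\<^sup>2) powr (a - 1) * g x) (nhds z)"
    by eventually_elim (simp add: DERIV_imp_deriv df)
  then have d2f: "deriv (deriv f) z = (1 - z\<^sup>2) powr (a - 2) * ((1 - z\<^sup>2) * g' z - 2 * (a - 1) * z * g z)"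
    using DERIV_imp_deriv[OF has_real_derivative_powr_weight[OF dg z, of "a - 1"]]
    by (simp add: deriv_cong_ev algebra_simps)
  define s where "s = 1 - z\<^sup>2"
  define W where "W = s powr a"
  have "s > 0"
    using z by (simp add: s_def abs_square_less_1 abs_less_iff)
  then have powr_shift: "s powr (a - 1) = W / s" "s powr (a - 2) = W / s\<^sup>2"
    by (simp_all add: W_def powr_diff)
  have "Top (\<alpha> + 1) (poly \<pi>) f z
          = W * (g' z - 2 * (poly (pderiv \<pi>) z / poly \<pi> z) * g z
                 + s * (poly (pderiv (pderiv \<pi>)) z / poly \<pi> z) * poly \<tau> z
                 + (2 * \<alpha> + 1) * z * (poly (pderiv \<pi>) z / poly \<pi> z) * poly \<tau> z)"
  proof -
    have "f z = W * poly \<tau> z"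
      by (simp add: f_def W_def s_def)
    then show ?thesis
      unfolding Top_def d2f DERIV_imp_deriv[OF df[OF z]] deriv_poly s_def[symmetric] powr_shift
      unfolding a_def
      using \<open>s > 0\<close> assms(3) by (simp add: field_simps power2_eq_square)
  qed
  also have "\<dots> = W * (poly (concomitant \<alpha> \<tau> \<pi>) z / poly \<pi> z + (2 * \<alpha> + 1) * poly \<tau> z)"
    using assms(3) by (simp add: poly_concomitant g_def g'_def a_def s_def field_simps power2_eq_square)
  finally show ?thesis
    by (simp add: f_def W_def s_def a_def)
qed

lemma poly_eq_0_if_vanishes_off_roots:
  fixes p q :: "real poly"
  assumes "q \<noteq> 0" "a < b" and vanishes: "\<And>z. a < z \<Longrightarrow> z < b \<Longrightarrow> poly q z \<noteq> 0 \<Longrightarrow> poly p z = 0"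
  shows "p = 0"
proof -
  have "{a<..<b} - {z. poly q z = 0} \<subseteq> {z. poly p z = 0}"
    using vanishes by auto
  moreover have "infinite ({a<..<b} - {z. poly q z = 0})"
    using poly_roots_finite[OF assms(1)] assms(2) by (intro Diff_infinite_finite) auto
  ultimately show ?thesis
    using poly_roots_finite finite_subset by blast
qed

lemma concomitant_eq_if_powr_weight_eigenfunction:
  fixes \<tau> \<pi> :: "real poly"
  assumes "\<pi> \<noteq> 0"
    and eigen: "\<forall>z. -1 < z \<and> z < 1 \<and> poly \<pi> z \<noteq> 0 \<longrightarrow>
       Top (\<alpha> + 1) (poly \<pi>) (\<lambda>x. (1 - x\<^sup>2) powr (- \<alpha> - 1/2) * poly \<tau> x) z
         = lamh * ((1 - z\<^sup>2) powr (- \<alpha> - 1/2) * poly \<tau> z)"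
  shows "concomitant \<alpha> \<tau> \<pi> = smult (lamh - 2 * \<alpha> - 1) (\<tau> * \<pi>)"
proof -
  have "poly (concomitant \<alpha> \<tau> \<pi> - smult (lamh - 2 * \<alpha> - 1) (\<tau> * \<pi>)) z = 0"
    if z: "-1 < z" "z < 1" and "poly \<pi> z \<noteq> 0" for z
  proof -
    have "1 - z\<^sup>2 > 0"
      using z by (simp add: abs_square_less_1 abs_less_iff)
    then have "(1 - z\<^sup>2) powr (- \<alpha> - 1/2) \<noteq> 0"
      by simp
    then have "poly (concomitant \<alpha> \<tau> \<pi>) z / poly \<pi> z + (2 * \<alpha> + 1) * poly \<tau> z = lamh * poly \<tau> z"
      using eigen Top_powr_weight[OF that] that by auto
    with \<open>poly \<pi> z \<noteq> 0\<close> show ?thesis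
      by (simp add: field_simps)
  qed
  then have "concomitant \<alpha> \<tau> \<pi> - smult (lamh - 2 * \<alpha> - 1) (\<tau> * \<pi>) = 0"
    by (intro poly_eq_0_if_vanishes_off_roots[OF assms(1), of "-1" 1]) auto
  then show ?thesis
    by simp
qed

theorem mainTheorem8:
  fixes \<alpha> lamh :: real and \<tau> \<pi> :: "real poly"
  assumes "\<tau> \<noteq> 0" and "\<pi> \<noteq> 0"
    and hyp: "\<forall>z. -1 < z \<and> z < 1 \<and> poly \<pi> z \<noteq> 0 \<longrightarrow>
       Top (\<alpha> + 1) (poly \<pi>) (\<lambda>x. (1 - x\<^sup>2) powr (- \<alpha> - 1/2) * poly \<tau> x) z
         = lamh * ((1 - z\<^sup>2) powr (- \<alpha> - 1/2) * poly \<tau> z)"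
  shows "(\<forall>z. poly \<tau> z \<noteq> 0 \<longrightarrow>
            Top \<alpha> (poly \<tau>) (poly \<pi>) z = (lamh - 2 * \<alpha> - 1) * poly \<pi> z)
       \<and> (\<forall>S y. open S \<and> (\<forall>x\<in>S. y differentiable at x) \<and> (\<forall>x\<in>S. deriv y differentiable at x)
            \<longrightarrow> (\<forall>z\<in>S. poly \<tau> z \<noteq> 0 \<and> poly \<pi> z \<noteq> 0 \<longrightarrow>
                  Bop \<alpha> (poly \<pi>) (poly \<tau>) (Aop (poly \<tau>) (poly \<pi>) y) z
                    = Top \<alpha> (poly \<tau>) y z - (lamh - 2 * \<alpha> - 1) * y z
                \<and> Aop (poly \<tau>) (poly \<pi>) (Bop \<alpha> (poly \<pi>) (poly \<tau>) y) z
                    = Top (\<alpha> + 1) (poly \<pi>) y z - lamh * y z))"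
proof -
  have R: "concomitant \<alpha> \<tau> \<pi> = smult (lamh - 2 * \<alpha> - 1) (\<tau> * \<pi>)"
    using concomitant_eq_if_powr_weight_eigenfunction[OF assms(2) hyp] .
  have "Top \<alpha> (poly \<tau>) (poly \<pi>) z = (lamh - 2 * \<alpha> - 1) * poly \<pi> z" if "poly \<tau> z \<noteq> 0" for z
    using that by (simp add: Top_poly R)
  moreover have "Bop \<alpha> (poly \<pi>) (poly \<tau>) (Aop (poly \<tau>) (poly \<pi>) y) z
                   = Top \<alpha> (poly \<tau>) y z - (lamh - 2 * \<alpha> - 1) * y z
                 \<and> Aop (poly \<tau>) (poly \<pi>) (Bop \<alpha> (poly \<pi>) (poly \<tau>) y) z
                   = Top (\<alpha> + 1) (poly \<pi>) y z - lamh * y z"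
    if "y differentiable at z" "deriv y differentiable at z" "poly \<tau> z \<noteq> 0" "poly \<pi> z \<noteq> 0" for y z
    using that by (simp add: Bop_Aop Aop_Bop R)
  ultimately show ?thesis
    by blast
qed

end
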